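(* Let $t$ be a $\mu$-term over the finite alphabet $X$ and let $(x_n,y_n)_n$ be a factorization sequence for $t$. Then each of the sequences $(x_n)_n$ and $(y_n)_n$ has a subsequence converging in $(\overline{\Omega}_X\mathsf S)^1$ to the value in $\overline{\Omega}_X\mathsf S$ of a $\mu$-term (the empty term being allowed), i.e. to a $\mu$-word over $\mathsf S$.
   Context: $X$ is a finite alphabet, $\mathsf S$ is the pseudovariety of all finite semigroups and $\overline{\Omega}_X\mathsf S$ is the free profinite semigroup on $X$; $(\overline{\Omega}_X\mathsf S)^1$ is it with an identity adjoined (the empty word). $\widehat{\mathbb N}$ is the profinite completion of $(\mathbb N,+)$, and for $\alpha\in\widehat{\mathbb N}$ the $\alpha$-power $x\mapsto x^\alpha$ is the usual continuous unary operation on profinite semigroups. $\mu$ denotes the implicit signature consisting of binary multiplication together with all unary operations $x\mapsto x^\alpha$ with $\alpha\in\widehat{\mathbb N}\setminus\mathbb N$. A $\mu$-term is an element of the free algebra on $X$ in this signature with associative multiplication (the empty term is allowed); its value in $\overline{\Omega}_X\mathsf S$ is denoted $[t]_{\mathsf S}$, and a $\mu$-word over $\mathsf S$ is such a value. For each $\alpha\in\widehat{\mathbb N}$ a sequence $(\mathrm{Approx}_n(\alpha))_n$ of natural numbers converging to $\alpha$ is fixed, constant if $\alpha$ is finite and strictly increasing otherwise. For a $\mu$-term $t$, $\mathrm{Approx}_n(t)$ is the finite word obtained by recursively replacing each subterm $v^\alpha$ ($\alpha$ infinite) by $v^{\mathrm{Approx}_n(\alpha)}$. A factorization sequence for $t$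 is a sequence $(x_n,y_n)_n$ with $x_n\in X^*$, $y_n\in X^+$ and $x_ny_n=\mathrm{Approx}_n(t)$ for all $n$. *)

theory Defs
  imports Main
begin

text \<open>The infinite elements of the profinite completion of (N,+) are identified with
  compatible families of residues (the profinite integers): f m is the residue modulo m
  (for m > 0), compatible under divisibility; the value at 0 is normalised to 0.\<close>

typedef zhat = "{f :: nat \<Rightarrow> nat. f 0 = 0 \<and> (\<forall>m>0. f m < m) \<and>
    (\<forall>d m. 0 < d \<longrightarrow> 0 < m \<longrightarrow> d dvd m \<longrightarrow> f m mod d = f d)}"
  by (rule exI[of _ "\<lambda>_. 0"]) auto

text \<open>A sequence of naturals which is strictly increasing converges (in the profinite
  completion of N) to the infinite element alpha iff its residues modulo every m > 0 are
  eventually those of alpha.\<close>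

definition approx_ok :: "(zhat \<Rightarrow> nat \<Rightarrow> nat) \<Rightarrow> bool" where
  "approx_ok ap \<longleftrightarrow> (\<forall>\<alpha>. strict_mono (ap \<alpha>) \<and>
      (\<forall>m>0. \<forall>\<^sub>F n in sequentially. ap \<alpha> n mod m = Rep_zhat \<alpha> m))"

text \<open>Multiplication is associative, so a mu-term is a (possibly empty) list of factors,
  each factor a letter or an omega-like power (with infinite exponent) of a mu-term.\<close>

datatype 'a mu = MLet 'a | MPow "'a mu list" zhat

type_synonym 'a muterm = "'a mu list"

primrec apx :: "(zhat \<Rightarrow> nat \<Rightarrow> nat) \<Rightarrow> nat \<Rightarrow> 'a mu \<Rightarrow> 'a list"
  and apxs :: "(zhat \<Rightarrow> nat \<Rightarrow> nat) \<Rightarrow> nat \<Rightarrow> 'a mu list \<Rightarrow> 'a list" where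
  "apx ap n (MLet a) = [a]"
| "apx ap n (MPow ts \<alpha>) = concat (replicate (ap \<alpha> n) (apxs ap n ts))"
| "apxs ap n [] = []"
| "apxs ap n (t # ts) = apx ap n t @ apxs ap n ts"

definition factorization_seq ::
  "(zhat \<Rightarrow> nat \<Rightarrow> nat) \<Rightarrow> 'a muterm \<Rightarrow> (nat \<Rightarrow> 'a list) \<Rightarrow> (nat \<Rightarrow> 'a list) \<Rightarrow> bool" where
  "factorization_seq ap t x y \<longleftrightarrow> (\<forall>n. y n \<noteq> [] \<and> x n @ y n = apxs ap n t)"

definition fin_cong :: "('a list \<times> 'a list) set \<Rightarrow> bool" where
  "fin_cong \<theta> \<longleftrightarrow> equiv UNIV \<theta> \<and> finite (UNIV // \<theta>) \<and>
     (\<forall>u v w z. (u, v) \<in> \<theta> \<longrightarrow> (w, z) \<in> \<theta> \<longrightarrow> (u @ w, v @ z) \<in> \<theta>)"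

text \<open>(Omega_X S)^1 = Omega_X M is the inverse limit of the finite monoids X^*/theta;
  an element is a compatible choice of a class for each finite-index congruence.\<close>
definition profinite_word :: "(('a list \<times> 'a list) set \<Rightarrow> 'a list set) \<Rightarrow> bool" where
  "profinite_word u \<longleftrightarrow> (\<forall>\<theta>. fin_cong \<theta> \<longrightarrow> u \<theta> \<in> UNIV // \<theta>) \<and>
     (\<forall>\<theta> \<theta>'. fin_cong \<theta> \<longrightarrow> fin_cong \<theta>' \<longrightarrow> \<theta> \<subseteq> \<theta>' \<longrightarrow> u \<theta> \<subseteq> u \<theta>')"

definition pconv :: "(nat \<Rightarrow> 'a list) \<Rightarrow> (('a list \<times> 'a list) set \<Rightarrow> 'a list set) \<Rightarrow> bool" where
  "pconv w u \<longleftrightarrow> (\<forall>\<theta>. fin_cong \<theta> \<longrightarrow> (\<forall>\<^sub>F n in sequentially. w n \<in> u \<theta>))"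

text \<open>Value of a mu-term in the finite monoid X^*/theta, via a representative word.
  With N = number of classes and m = N!, the power s^alpha in a finite monoid with N
  elements equals s^(m + (alpha mod m)) (index <= m, period divides m).\<close>
definition pow_exp :: "('a list \<times> 'a list) set \<Rightarrow> zhat \<Rightarrow> nat" where
  "pow_exp \<theta> \<alpha> = (let m = fact (card (UNIV // \<theta>)) in m + Rep_zhat \<alpha> m)"

primrec evw :: "('a list \<times> 'a list) set \<Rightarrow> 'a mu \<Rightarrow> 'a list"
  and evws :: "('a list \<times> 'a list) set \<Rightarrow> 'a mu list \<Rightarrow> 'a list" where
  "evw \<theta> (MLet a) = [a]"
| "evw \<theta> (MPow ts \<alpha>) = concat (replicate (pow_exp \<theta> \<alpha>) (evws \<theta> ts))"
| "evws \<theta> [] = []"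
| "evws \<theta> (t # ts) = evw \<theta> t @ evws \<theta> ts"

definition mu_value :: "'a muterm \<Rightarrow> ('a list \<times> 'a list) set \<Rightarrow> 'a list set" where
  "mu_value t = (\<lambda>\<theta>. \<theta> `` {evws \<theta> t})"

end

theory Submission
  imports Defs "HOL-Library.Diagonal_Subsequence" "HOL-Library.Infinite_Set"
begin

text \<open>The proof is by induction on the mu-term, for a statement that is stable under passing
  to subsequences: for every factorization of a subsequence of Approx_n(t), both factors
  converge to mu-words along a common subsequence.  A cut of a product lies inside one of the
  factors, and a cut of a power v^k has the form v^i x' | y' v^j with x' y' = v.  The powers
  v_n^(i_n) are handled by compactness of the profinite completion of N: some subsequence of the
  exponents is constant or converges to an infinite profinite number beta, and then v_n^(i_n)
  tends to [s^beta], because in a finite monoid with N elements s^k only depends on k mod N!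
  once k >= N.\<close>

definition word_pow :: "'a list \<Rightarrow> nat \<Rightarrow> 'a list" where
  "word_pow v k = concat (replicate k v)"

lemma word_pow_add: "word_pow v (a + b) = word_pow v a @ word_pow v b"
  by (simp add: word_pow_def replicate_add)

lemma evws_append: "evws \<theta> (s @ s') = evws \<theta> s @ evws \<theta> s'"
  by (induct s) auto

lemma evws_concat_replicate: "evws \<theta> (concat (replicate c s)) = word_pow (evws \<theta> s) c"
  by (induct c) (auto simp: word_pow_def evws_append)

lemma evws_MPow: "evws \<theta> [MPow s \<beta>] = word_pow (evws \<theta> s) (pow_exp \<theta> \<beta>)"
  by (simp add: word_pow_def)

lemma mem_mu_value_iff: "w \<in> mu_value s \<theta> \<longleftrightarrow> (evws \<theta> s, w) \<in> \<theta>"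
  by (simp add: mu_value_def)

subsection \<open>Finite-index congruences\<close>

lemma fin_cong_refl: "fin_cong \<theta> \<Longrightarrow> (u, u) \<in> \<theta>"
  unfolding fin_cong_def equiv_def refl_on_def by auto

lemma fin_cong_sym: "fin_cong \<theta> \<Longrightarrow> (u, v) \<in> \<theta> \<Longrightarrow> (v, u) \<in> \<theta>"
  unfolding fin_cong_def equiv_def by (auto dest: symD)

lemma fin_cong_trans: "fin_cong \<theta> \<Longrightarrow> (u, v) \<in> \<theta> \<Longrightarrow> (v, w) \<in> \<theta> \<Longrightarrow> (u, w) \<in> \<theta>"
  unfolding fin_cong_def equiv_def by (auto dest: transD)

lemma fin_cong_append:
  "fin_cong \<theta> \<Longrightarrow> (u, v) \<in> \<theta> \<Longrightarrow> (w, z) \<in> \<theta> \<Longrightarrow> (u @ w, v @ z) \<in> \<theta>"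
  unfolding fin_cong_def by blast

lemma fin_cong_word_pow:
  assumes "fin_cong \<theta>" "(u, v) \<in> \<theta>"
  shows "(word_pow u k, word_pow v k) \<in> \<theta>"
  by (induct k) (simp_all add: word_pow_def fin_cong_refl fin_cong_append assms)

lemma fin_cong_word_pow_cycle:
  assumes fc: "fin_cong \<theta>"
  obtains i p where "0 < p" "i + p \<le> card (UNIV // \<theta>)"
    "\<And>c q. i \<le> c \<Longrightarrow> (word_pow v c, word_pow v (c + q * p)) \<in> \<theta>"
proof -
  define N where "N = card (UNIV // \<theta>)"
  define cls where "cls k = \<theta> `` {word_pow v k}" for k
  have "cls ` {0..N} \<subseteq> UNIV // \<theta>"
    by (auto simp: cls_def intro: quotientI)
  then have "card (cls ` {0..N}) \<le> N"
    using fc unfolding N_def fin_cong_def by (metis card_mono)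
  then have "card (cls ` {0..N}) < card {0..N}"
    by simp
  then obtain i j where ij: "i < j" "j \<le> N" "cls i = cls j"
    using pigeonhole unfolding inj_on_def by (metis atLeastAtMost_iff linorder_neqE_nat)
  have "(word_pow v i, word_pow v j) \<in> \<theta>"
    using ij(3) fc eq_equiv_class_iff[of UNIV \<theta>] by (simp add: cls_def fin_cong_def)
  \<comment> \<open>right-multiplying the collision by \<open>v\<^sup>k\<close> shows that the powers from \<open>i\<close> on have period \<open>j - i\<close>\<close>
  then have step: "(word_pow v (i + k), word_pow v (j + k)) \<in> \<theta>" for k
    using fin_cong_append[OF fc _ fin_cong_refl[OF fc]] by (simp add: word_pow_add)
  have "(word_pow v c, word_pow v (c + q * (j - i))) \<in> \<theta>" if "i \<le> c" for c q
  proof (induct q)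
    case 0
    show ?case by (simp add: fin_cong_refl fc)
  next
    case (Suc q)
    have "i + (c + q * (j - i) - i) = c + q * (j - i)"
      "j + (c + q * (j - i) - i) = c + Suc q * (j - i)"
      using that ij(1) by simp_all
    then have "(word_pow v (c + q * (j - i)), word_pow v (c + Suc q * (j - i))) \<in> \<theta>"
      using step[of "c + q * (j - i) - i"] by simp
    with Suc show ?case by (rule fin_cong_trans[OF fc])
  qed
  with ij show thesis by (intro that[of "j - i" i]) (auto simp: N_def)
qed

text \<open>In a finite monoid with \<open>N\<close> elements all powers \<open>s\<^sup>k\<close> with \<open>k \<ge> N\<close> lie in the
  cyclic part, whose period divides \<open>N!\<close>; this is what justifies \<open>pow_exp\<close>.\<close>
lemma fin_cong_word_pow_eq:
  assumes fc: "fin_cong \<theta>"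
    and "card (UNIV // \<theta>) \<le> a" "card (UNIV // \<theta>) \<le> b"
    and "a mod fact (card (UNIV // \<theta>)) = b mod fact (card (UNIV // \<theta>))"
  shows "(word_pow v a, word_pow v b) \<in> \<theta>"
proof -
  define N where "N = card (UNIV // \<theta>)"
  obtain i p where p: "0 < p" "i + p \<le> N"
    and cyc: "\<And>c q. i \<le> c \<Longrightarrow> (word_pow v c, word_pow v (c + q * p)) \<in> \<theta>"
    using fin_cong_word_pow_cycle[OF fc] unfolding N_def by metis
  have "p dvd fact N"
    using p by (intro dvd_fact) auto
  have le: "(word_pow v a, word_pow v b) \<in> \<theta>"
    if "a \<le> b" "N \<le> a" "a mod fact N = b mod fact N" for a b
  proof -
    have "fact N dvd b - a"
      using that by (metis mod_eq_dvd_iff_nat)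
    with \<open>p dvd fact N\<close> have "p dvd b - a"
      by (rule dvd_trans)
    then obtain q where "b - a = q * p"
      by (auto simp: dvd_def mult.commute)
    then have "b = a + q * p"
      using that(1) by simp
    then show ?thesis
      using cyc[of a q] that(2) p(2) by simp
  qed
  show ?thesis
  proof (cases "a \<le> b")
    case True
    then show ?thesis
      using le[of a b] assms by (simp add: N_def)
  next
    case False
    then have "(word_pow v b, word_pow v a) \<in> \<theta>"
      using le[of b a] assms by (simp add: N_def)
    then show ?thesis
      by (rule fin_cong_sym[OF fc])
  qed
qed

subsection \<open>Profinite exponents\<close>

lemma subseq_const_of_finite_range:
  fixes f :: "nat \<Rightarrow> 'a"
  assumes "finite (range f)"
  obtains r c where "strict_mono (r :: nat \<Rightarrow> nat)" "\<And>n. f (r n) = c"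
proof -
  obtain c where "infinite (f -` {c})"
    using inf_img_fin_dom[OF assms infinite_UNIV_nat] by blast
  then obtain r :: "nat \<Rightarrow> nat" where "strict_mono r" "\<forall>n. r n \<in> f -` {c}"
    by (metis infinite_enumerate)
  then show thesis
    using that[of r c] by simp
qed

lemma subseq_cases:
  fixes P Q :: "nat \<Rightarrow> bool"
  assumes "\<And>n. P n \<or> Q n"
  obtains (P) r where "strict_mono (r :: nat \<Rightarrow> nat)" "\<And>n. P (r n)"
    | (Q) r where "strict_mono (r :: nat \<Rightarrow> nat)" "\<And>n. Q (r n)"
proof -
  have "finite (range P)"
    by (rule finite_subset[of _ UNIV]) auto
  then obtain r c where "strict_mono (r :: nat \<Rightarrow> nat)" "\<And>n. P (r n) = c"
    by (metis subseq_const_of_finite_range)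
  then show thesis
    using that assms by (cases c) blast+
qed

definition zhat_limit :: "(nat \<Rightarrow> nat) \<Rightarrow> zhat \<Rightarrow> bool" where
  "zhat_limit e \<beta> \<longleftrightarrow> filterlim e at_top sequentially \<and>
     (\<forall>m>0. \<forall>\<^sub>F n in sequentially. e n mod m = Rep_zhat \<beta> m)"

lemma approx_ok_zhat_limit: "approx_ok ap \<Longrightarrow> zhat_limit (ap \<alpha>) \<alpha>"
  unfolding approx_ok_def zhat_limit_def
  by (simp add: filterlim_subseq)

lemma zhat_of_stable_residues:
  assumes "\<And>m. 0 < m \<Longrightarrow> \<exists>c. \<forall>\<^sub>F n in sequentially. e n mod m = c"
  obtains \<beta> where "\<And>m. 0 < m \<Longrightarrow> \<forall>\<^sub>F n in sequentially. e n mod m = Rep_zhat \<beta> m"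
proof -
  define g where "g m = (if m = 0 then 0 else SOME c. \<forall>\<^sub>F n in sequentially. e n mod m = c)"
    for m
  have g: "\<forall>\<^sub>F n in sequentially. e n mod m = g m" if "0 < m" for m
    using someI_ex[OF assms[OF that]] that by (simp add: g_def)
  have "g m < m" if "0 < m" for m
    using eventually_happens'[OF sequentially_bot g[OF that]] that by (metis mod_less_divisor)
  moreover have "g m mod d = g d" if dm: "0 < d" "0 < m" "d dvd m" for d m
  proof -
    obtain n where "e n mod m = g m" "e n mod d = g d"
      using eventually_happens'[OF sequentially_bot eventually_conj[OF g[OF dm(2)] g[OF dm(1)]]]
      by blast
    then show ?thesis
      using dm(3) by (metis mod_mod_cancel)
  qed
  ultimately have "Rep_zhat (Abs_zhat g) = g"
    by (intro Abs_zhat_inverse) (simp add: g_def)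
  then show thesis
    using that[of "Abs_zhat g"] g by simp
qed

lemma subseq_stable_residues:
  fixes e :: "nat \<Rightarrow> nat"
  obtains \<sigma> where "strict_mono \<sigma>"
    "\<And>m. 0 < m \<Longrightarrow> \<exists>c. \<forall>\<^sub>F n in sequentially. e (\<sigma> n) mod m = c"
proof -
  define P where "P k s \<longleftrightarrow> (\<exists>c. \<forall>n. e (s n) mod Suc k = c)" for k and s :: "nat \<Rightarrow> nat"
  interpret subseqs P
  proof
    fix k and s :: "nat \<Rightarrow> nat"
    have fin: "finite (range (\<lambda>n. e (s n) mod Suc k))"
      by (rule finite_subset[of _ "{..<Suc k}"]) auto
    obtain r c where "strict_mono (r :: nat \<Rightarrow> nat)" "\<And>n. e (s (r n)) mod Suc k = c"
      using subseq_const_of_finite_range[OF fin] by blast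
    then show "\<exists>r. strict_mono r \<and> P k (s \<circ> r)"
      unfolding P_def by auto
  qed
  have "\<exists>c. \<forall>\<^sub>F n in sequentially. e (diagseq n) mod Suc k = c" for k
  proof -
    have "P k (diagseq \<circ> (+) (Suc k))"
      by (rule diagseq_holds) (auto simp: P_def)
    then obtain c where c: "\<And>n. e (diagseq (Suc k + n)) mod Suc k = c"
      unfolding P_def by auto
    have "\<forall>\<^sub>F n in sequentially. e (diagseq n) mod Suc k = c"
      unfolding eventually_sequentially by (metis c le_add_diff_inverse)
    then show ?thesis ..
  qed
  then have "\<exists>c. \<forall>\<^sub>F n in sequentially. e (diagseq n) mod m = c" if "0 < m" for m
    using that by (metis Suc_pred)
  then show thesis
    using that subseq_diagseq by blast
qed

lemma subseq_const_or_zhat_limit: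
  fixes e :: "nat \<Rightarrow> nat"
  obtains \<sigma> where "strict_mono \<sigma>" "(\<exists>c. \<forall>n. e (\<sigma> n) = c) \<or> (\<exists>\<beta>. zhat_limit (e \<circ> \<sigma>) \<beta>)"
proof (cases "\<exists>c. infinite {n. e n = c}")
  case True
  then obtain c \<sigma> where "strict_mono (\<sigma> :: nat \<Rightarrow> nat)" "\<forall>n. \<sigma> n \<in> {n. e n = c}"
    by (metis infinite_enumerate)
  then show thesis
    using that by auto
next
  case False
  have "{n. e n < B} = (\<Union>c<B. {n. e n = c})" for B
    by auto
  then have "finite {n. \<not> B \<le> e n}" for B
    using False by (simp add: not_le)
  then have "filterlim e at_top sequentially"
    unfolding filterlim_at_top by (simp add: eventually_cofinite[symmetric] cofinite_eq_sequentially)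
  obtain \<sigma> where \<sigma>: "strict_mono \<sigma>"
    "\<And>m. 0 < m \<Longrightarrow> \<exists>c. \<forall>\<^sub>F n in sequentially. e (\<sigma> n) mod m = c"
    using subseq_stable_residues[of e] by blast
  then obtain \<beta> where "\<And>m. 0 < m \<Longrightarrow> \<forall>\<^sub>F n in sequentially. e (\<sigma> n) mod m = Rep_zhat \<beta> m"
    using zhat_of_stable_residues[of "e \<circ> \<sigma>"] by auto
  with \<open>filterlim e at_top sequentially\<close> \<sigma>(1) have "zhat_limit (e \<circ> \<sigma>) \<beta>"
    unfolding zhat_limit_def
    by (auto simp: comp_def intro: filterlim_compose[OF _ filterlim_subseq])
  with \<sigma>(1) show thesis
    using that by blast
qed

subsection \<open>Convergence to mu-words\<close>

lemma pconv_subseq: "strict_mono r \<Longrightarrow> pconv w u \<Longrightarrow> pconv (w \<circ> r) u"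
  unfolding pconv_def using eventually_subseq by fastforce

lemma pconv_mu_value_iff:
  "pconv w (mu_value s) \<longleftrightarrow> (\<forall>\<theta>. fin_cong \<theta> \<longrightarrow> (\<forall>\<^sub>F n in sequentially. (evws \<theta> s, w n) \<in> \<theta>))"
  by (simp add: pconv_def mem_mu_value_iff)

lemma pconv_Nil: "pconv (\<lambda>n. []) (mu_value [])"
  by (simp add: pconv_mu_value_iff fin_cong_refl)

lemma pconv_letter: "pconv (\<lambda>n. [a]) (mu_value [MLet a])"
  by (simp add: pconv_mu_value_iff fin_cong_refl)

lemma pconv_append:
  assumes "pconv w (mu_value s)" "pconv w' (mu_value s')"
  shows "pconv (\<lambda>n. w n @ w' n) (mu_value (s @ s'))"
  unfolding pconv_mu_value_iff
proof (intro allI impI)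
  fix \<theta> :: "('a list \<times> 'a list) set"
  assume fc: "fin_cong \<theta>"
  have "\<forall>\<^sub>F n in sequentially. (evws \<theta> s, w n) \<in> \<theta> \<and> (evws \<theta> s', w' n) \<in> \<theta>"
    using assms fc by (simp add: pconv_mu_value_iff eventually_conj)
  then show "\<forall>\<^sub>F n in sequentially. (evws \<theta> (s @ s'), w n @ w' n) \<in> \<theta>"
    by (rule eventually_mono) (simp add: evws_append fin_cong_append[OF fc])
qed

lemma pconv_word_pow_const:
  assumes "pconv w (mu_value s)"
  shows "pconv (\<lambda>n. word_pow (w n) c) (mu_value (concat (replicate c s)))"
  using assms by (auto simp: pconv_mu_value_iff evws_concat_replicate
      elim!: eventually_mono intro: fin_cong_word_pow)

lemma pconv_word_pow:
  assumes w: "pconv w (mu_value s)" and e: "zhat_limit e \<beta>"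
  shows "pconv (\<lambda>n. word_pow (w n) (e n)) (mu_value [MPow s \<beta>])"
  unfolding pconv_mu_value_iff
proof (intro allI impI)
  fix \<theta> :: "('a list \<times> 'a list) set"
  assume fc: "fin_cong \<theta>"
  define N where "N = card (UNIV // \<theta>)"
  define m :: nat where "m = fact N"
  have "N \<le> m" "0 < m"
    by (simp_all add: m_def fact_ge_self)
  have pow_exp: "pow_exp \<theta> \<beta> = m + Rep_zhat \<beta> m" "N \<le> pow_exp \<theta> \<beta>"
    "pow_exp \<theta> \<beta> mod m = Rep_zhat \<beta> m"
    using Rep_zhat[of \<beta>] \<open>N \<le> m\<close> \<open>0 < m\<close> by (auto simp: pow_exp_def m_def N_def Let_def)
  have "\<forall>\<^sub>F n in sequentially. (evws \<theta> s, w n) \<in> \<theta> \<and> N \<le> e n \<and> e n mod m = Rep_zhat \<beta> m"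
    using w fc e \<open>0 < m\<close> unfolding pconv_mu_value_iff zhat_limit_def filterlim_at_top
    by (simp add: eventually_conj)
  then show "\<forall>\<^sub>F n in sequentially. (evws \<theta> [MPow s \<beta>], word_pow (w n) (e n)) \<in> \<theta>"
  proof (rule eventually_mono)
    fix n
    assume n: "(evws \<theta> s, w n) \<in> \<theta> \<and> N \<le> e n \<and> e n mod m = Rep_zhat \<beta> m"
    have "(word_pow (evws \<theta> s) (pow_exp \<theta> \<beta>), word_pow (evws \<theta> s) (e n)) \<in> \<theta>"
      by (rule fin_cong_word_pow_eq[OF fc, folded N_def m_def]) (use n pow_exp in auto)
    moreover have "(word_pow (evws \<theta> s) (e n), word_pow (w n) (e n)) \<in> \<theta>"
      using n fin_cong_word_pow[OF fc] by blast
    ultimately show "(evws \<theta> [MPow s \<beta>], word_pow (w n) (e n)) \<in> \<theta>"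
      unfolding evws_MPow by (rule fin_cong_trans[OF fc])
  qed
qed

lemma pconv_word_pow_subseq:
  assumes "pconv w (mu_value s)"
  obtains \<sigma> s' where "strict_mono \<sigma>" "pconv (\<lambda>n. word_pow (w (\<sigma> n)) (e (\<sigma> n))) (mu_value s')"
proof -
  obtain \<sigma> where \<sigma>: "strict_mono \<sigma>" "(\<exists>c. \<forall>n. e (\<sigma> n) = c) \<or> (\<exists>\<beta>. zhat_limit (e \<circ> \<sigma>) \<beta>)"
    using subseq_const_or_zhat_limit[of e] by blast
  have w: "pconv (\<lambda>n. w (\<sigma> n)) (mu_value s)"
    using pconv_subseq[OF \<sigma>(1) assms] by (simp add: comp_def)
  from \<sigma>(2) show thesis
  proof (elim disjE exE)
    fix c
    assume "\<forall>n. e (\<sigma> n) = c"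
    then show thesis
      using that[OF \<sigma>(1)] pconv_word_pow_const[OF w, of c] by simp
  next
    fix \<beta>
    assume "zhat_limit (e \<circ> \<sigma>) \<beta>"
    then have "pconv (\<lambda>n. word_pow (w (\<sigma> n)) ((e \<circ> \<sigma>) n)) (mu_value [MPow s \<beta>])"
      by (rule pconv_word_pow[OF w])
    then show thesis
      by (intro that[OF \<sigma>(1)]) (simp add: comp_def)
  qed
qed

lemma pconv_apxs_of_apx:
  assumes "\<And>a. a \<in> set ts \<Longrightarrow> pconv (\<lambda>n. apx ap n a) (mu_value [a])"
  shows "pconv (\<lambda>n. apxs ap n ts) (mu_value ts)"
  using assms
proof (induct ts)
  case Nil
  show ?case using pconv_Nil by simp
next
  case (Cons a ts)
  then show ?case using pconv_append[of _ "[a]" _ ts] by simp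
qed

lemma pconv_apx:
  assumes ap: "approx_ok ap"
  shows "pconv (\<lambda>n. apx ap n a) (mu_value [a])"
proof (induct a)
  case (MLet x)
  show ?case using pconv_letter by simp
next
  case (MPow ts \<alpha>)
  then have "pconv (\<lambda>n. apxs ap n ts) (mu_value ts)"
    by (rule pconv_apxs_of_apx)
  then have "pconv (\<lambda>n. word_pow (apxs ap n ts) (ap \<alpha> n)) (mu_value [MPow ts \<alpha>])"
    using approx_ok_zhat_limit[OF ap] by (rule pconv_word_pow)
  then show ?case
    by (simp add: word_pow_def)
qed

lemma pconv_apxs: "approx_ok ap \<Longrightarrow> pconv (\<lambda>n. apxs ap n ts) (mu_value ts)"
  by (rule pconv_apxs_of_apx) (rule pconv_apx)

subsection \<open>Factorization sequences\<close>

definition mu_subconvergent :: "(nat \<Rightarrow> 'a list) \<Rightarrow> bool" where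
  "mu_subconvergent w \<longleftrightarrow>
     (\<forall>\<tau> :: nat \<Rightarrow> nat. strict_mono \<tau> \<longrightarrow>
        (\<exists>\<sigma> :: nat \<Rightarrow> nat. \<exists>s. strict_mono \<sigma> \<and> pconv (w \<circ> \<tau> \<circ> \<sigma>) (mu_value s)))"

definition jointly_subconverge :: "(nat \<Rightarrow> 'a list) \<Rightarrow> (nat \<Rightarrow> 'a list) \<Rightarrow> bool" where
  "jointly_subconverge x y \<longleftrightarrow>
     (\<exists>\<sigma> s s'. strict_mono \<sigma> \<and> pconv (x \<circ> \<sigma>) (mu_value s) \<and> pconv (y \<circ> \<sigma>) (mu_value s'))"

text \<open>Quantifying over the subsequence \<open>\<tau>\<close> makes the property hereditary, which the induction
  on mu-terms needs.\<close>
definition splits_subconverge :: "(nat \<Rightarrow> 'a list) \<Rightarrow> bool" where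
  "splits_subconverge A \<longleftrightarrow>
     (\<forall>\<tau> x y. strict_mono \<tau> \<longrightarrow> (\<forall>n. x n @ y n = A (\<tau> n)) \<longrightarrow> jointly_subconverge x y)"

lemma mu_subconvergent_of_pconv: "pconv w (mu_value s) \<Longrightarrow> mu_subconvergent w"
  unfolding mu_subconvergent_def
  by (metis pconv_subseq strict_mono_o comp_assoc strict_mono_id comp_id)

lemma mu_subconvergent_word_pow:
  assumes "pconv v (mu_value s)"
  shows "mu_subconvergent (\<lambda>n. word_pow (v n) (e n))"
  unfolding mu_subconvergent_def
proof (intro allI impI)
  fix \<tau> :: "nat \<Rightarrow> nat"
  assume "strict_mono \<tau>"
  then have "pconv (\<lambda>n. v (\<tau> n)) (mu_value s)"
    using pconv_subseq[OF _ assms] by (simp add: comp_def)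
  then obtain \<sigma> s' where "strict_mono \<sigma>"
    "pconv (\<lambda>n. word_pow (v (\<tau> (\<sigma> n))) (e (\<tau> (\<sigma> n)))) (mu_value s')"
    by (rule pconv_word_pow_subseq)
  then show "\<exists>\<sigma> s. strict_mono \<sigma> \<and> pconv ((\<lambda>n. word_pow (v n) (e n)) \<circ> \<tau> \<circ> \<sigma>) (mu_value s)"
    by (auto simp: comp_def)
qed

lemma jointly_subconverge_of_pconv:
  "pconv x (mu_value s) \<Longrightarrow> pconv y (mu_value s') \<Longrightarrow> jointly_subconverge x y"
  unfolding jointly_subconverge_def by (metis strict_mono_id comp_id)

lemma jointly_subconverge_subseq:
  assumes "strict_mono r" "jointly_subconverge (x \<circ> r) (y \<circ> r)"
  shows "jointly_subconverge x y"
  using assms unfolding jointly_subconverge_def by (metis strict_mono_o comp_assoc)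

lemma jointly_subconverge_append_left:
  assumes A: "mu_subconvergent A" and zy: "jointly_subconverge z y"
  shows "jointly_subconverge (\<lambda>n. A n @ z n) y"
proof -
  obtain \<sigma> s s' where \<sigma>: "strict_mono \<sigma>" "pconv (z \<circ> \<sigma>) (mu_value s)" "pconv (y \<circ> \<sigma>) (mu_value s')"
    using zy unfolding jointly_subconverge_def by blast
  obtain \<rho> sa where \<rho>: "strict_mono \<rho>" "pconv (A \<circ> \<sigma> \<circ> \<rho>) (mu_value sa)"
    using A \<sigma>(1) unfolding mu_subconvergent_def by blast
  have "pconv (\<lambda>n. (A \<circ> \<sigma> \<circ> \<rho>) n @ (z \<circ> \<sigma> \<circ> \<rho>) n) (mu_value (sa @ s))"
    using pconv_append[OF \<rho>(2) pconv_subseq[OF \<rho>(1) \<sigma>(2)]] .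
  moreover have "pconv (y \<circ> \<sigma> \<circ> \<rho>) (mu_value s')"
    using pconv_subseq[OF \<rho>(1) \<sigma>(3)] .
  ultimately show ?thesis
    unfolding jointly_subconverge_def
    by (intro exI[of _ "\<sigma> \<circ> \<rho>"] exI conjI strict_mono_o \<sigma>(1) \<rho>(1)) (auto simp: comp_def)
qed

lemma jointly_subconverge_append_right:
  assumes B: "mu_subconvergent B" and xz: "jointly_subconverge x z"
  shows "jointly_subconverge x (\<lambda>n. z n @ B n)"
proof -
  obtain \<sigma> s s' where \<sigma>: "strict_mono \<sigma>" "pconv (x \<circ> \<sigma>) (mu_value s)" "pconv (z \<circ> \<sigma>) (mu_value s')"
    using xz unfolding jointly_subconverge_def by blast
  obtain \<rho> sb where \<rho>: "strict_mono \<rho>" "pconv (B \<circ> \<sigma> \<circ> \<rho>) (mu_value sb)"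
    using B \<sigma>(1) unfolding mu_subconvergent_def by blast
  have "pconv (\<lambda>n. (z \<circ> \<sigma> \<circ> \<rho>) n @ (B \<circ> \<sigma> \<circ> \<rho>) n) (mu_value (s' @ sb))"
    using pconv_append[OF pconv_subseq[OF \<rho>(1) \<sigma>(3)] \<rho>(2)] .
  moreover have "pconv (x \<circ> \<sigma> \<circ> \<rho>) (mu_value s)"
    using pconv_subseq[OF \<rho>(1) \<sigma>(2)] .
  ultimately show ?thesis
    unfolding jointly_subconverge_def
    by (intro exI[of _ "\<sigma> \<circ> \<rho>"] exI conjI strict_mono_o \<sigma>(1) \<rho>(1)) (auto simp: comp_def)
qed

lemma splits_subconverge_Nil: "splits_subconverge (\<lambda>k. [])"
proof -
  have "jointly_subconverge x y" if "\<forall>n. x n = [] \<and> y n = []" for x y :: "nat \<Rightarrow> 'a list"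
  proof -
    from that have "x = (\<lambda>n. [])" "y = (\<lambda>n. [])"
      by auto
    then show ?thesis
      using jointly_subconverge_of_pconv[OF pconv_Nil pconv_Nil] by simp
  qed
  then show ?thesis
    unfolding splits_subconverge_def by simp
qed

lemma splits_subconverge_letter: "splits_subconverge (\<lambda>k. [a])"
  unfolding splits_subconverge_def
proof (intro allI impI)
  fix \<tau> :: "nat \<Rightarrow> nat" and x y :: "nat \<Rightarrow> 'a list"
  assume "\<forall>n. x n @ y n = [a]"
  then have "(x n = [] \<and> y n = [a]) \<or> (x n = [a] \<and> y n = [])" for n
    by (simp add: append_eq_Cons_conv)
  then show "jointly_subconverge x y"
  proof (cases rule: subseq_cases[of "\<lambda>n. x n = [] \<and> y n = [a]" "\<lambda>n. x n = [a] \<and> y n = []"])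
    case (P r)
    then have "x \<circ> r = (\<lambda>n. [])" "y \<circ> r = (\<lambda>n. [a])"
      by auto
    then have "jointly_subconverge (x \<circ> r) (y \<circ> r)"
      using jointly_subconverge_of_pconv[OF pconv_Nil pconv_letter] by simp
    with P(1) show ?thesis
      by (rule jointly_subconverge_subseq)
  next
    case (Q r)
    then have "x \<circ> r = (\<lambda>n. [a])" "y \<circ> r = (\<lambda>n. [])"
      by auto
    then have "jointly_subconverge (x \<circ> r) (y \<circ> r)"
      using jointly_subconverge_of_pconv[OF pconv_letter pconv_Nil] by simp
    with Q(1) show ?thesis
      by (rule jointly_subconverge_subseq)
  qed
qed

lemma splits_subconverge_append:
  assumes A: "splits_subconverge A" "pconv A (mu_value sa)"
    and B: "splits_subconverge B" "pconv B (mu_value sb)"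
  shows "splits_subconverge (\<lambda>k. A k @ B k)"
  unfolding splits_subconverge_def
proof (intro allI impI)
  fix \<tau> :: "nat \<Rightarrow> nat" and x y :: "nat \<Rightarrow> 'a list"
  assume \<tau>: "strict_mono \<tau>" and xy: "\<forall>n. x n @ y n = A (\<tau> n) @ B (\<tau> n)"
  then have "(\<exists>z. A (\<tau> n) = x n @ z \<and> y n = z @ B (\<tau> n)) \<or>
      (\<exists>z. x n = A (\<tau> n) @ z \<and> B (\<tau> n) = z @ y n)" for n
    by (simp add: append_eq_append_conv2) metis
  then show "jointly_subconverge x y"
  proof (cases rule: subseq_cases[of "\<lambda>n. \<exists>z. A (\<tau> n) = x n @ z \<and> y n = z @ B (\<tau> n)"
        "\<lambda>n. \<exists>z. x n = A (\<tau> n) @ z \<and> B (\<tau> n) = z @ y n"])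
    case (P r)
    then obtain z where z: "\<And>n. A (\<tau> (r n)) = x (r n) @ z n" "\<And>n. y (r n) = z n @ B (\<tau> (r n))"
      by metis
    have "jointly_subconverge (x \<circ> r) z"
      using A(1) strict_mono_o[OF \<tau> P(1)] z(1) unfolding splits_subconverge_def by simp
    then have "jointly_subconverge (x \<circ> r) (\<lambda>n. z n @ (B \<circ> \<tau> \<circ> r) n)"
      using jointly_subconverge_append_right mu_subconvergent_of_pconv
        pconv_subseq[OF strict_mono_o[OF \<tau> P(1)] B(2)] by (metis comp_assoc)
    then have "jointly_subconverge (x \<circ> r) (y \<circ> r)"
      using z(2) by (simp add: comp_def)
    with P(1) show ?thesis
      by (rule jointly_subconverge_subseq)
  next
    case (Q r)
    then obtain z where z: "\<And>n. x (r n) = A (\<tau> (r n)) @ z n" "\<And>n. B (\<tau> (r n)) = z n @ y (r n)"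
      by metis
    have "jointly_subconverge z (y \<circ> r)"
      using B(1) strict_mono_o[OF \<tau> Q(1)] z(2) unfolding splits_subconverge_def by simp
    then have "jointly_subconverge (\<lambda>n. (A \<circ> \<tau> \<circ> r) n @ z n) (y \<circ> r)"
      using jointly_subconverge_append_left mu_subconvergent_of_pconv
        pconv_subseq[OF strict_mono_o[OF \<tau> Q(1)] A(2)] by (metis comp_assoc)
    then have "jointly_subconverge (x \<circ> r) (y \<circ> r)"
      using z(1) by (simp add: comp_def)
    with Q(1) show ?thesis
      by (rule jointly_subconverge_subseq)
  qed
qed

lemma append_eq_word_pow_split:
  assumes "x @ y = word_pow v k" "0 < k"
  shows "\<exists>i j x' y'. x = word_pow v i @ x' \<and> y = y' @ word_pow v j \<and> x' @ y' = v"
  using assms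
proof (induct k arbitrary: x y)
  case 0
  then show ?case by simp
next
  case (Suc k)
  then have "x @ y = v @ word_pow v k"
    by (simp add: word_pow_def)
  then obtain u where "x = v @ u \<and> u @ y = word_pow v k \<or> x @ u = v \<and> y = u @ word_pow v k"
    unfolding append_eq_append_conv2 by blast
  then show ?case
  proof (elim disjE conjE)
    assume x: "x = v @ u" and uy: "u @ y = word_pow v k"
    show ?case
    proof (cases "k = 0")
      case True
      with x uy have "x = word_pow v 0 @ v \<and> y = [] @ word_pow v 0 \<and> v @ [] = v"
        by (simp add: word_pow_def)
      then show ?thesis by blast
    next
      case False
      then obtain i j x' y' where "u = word_pow v i @ x'" "y = y' @ word_pow v j" "x' @ y' = v"
        using Suc(1)[OF uy] by blast
      with x have "x = word_pow v (Suc i) @ x' \<and> y = y' @ word_pow v j \<and> x' @ y' = v"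
        by (simp add: word_pow_def)
      then show ?thesis by blast
    qed
  next
    assume "x @ u = v" "y = u @ word_pow v k"
    then have "x = word_pow v 0 @ x \<and> y = u @ word_pow v k \<and> x @ u = v"
      by (simp add: word_pow_def)
    then show ?case by blast
  qed
qed

lemma splits_subconverge_word_pow:
  assumes B: "splits_subconverge B" "pconv B (mu_value sb)"
    and K: "\<forall>\<^sub>F n in sequentially. 0 < K n"
  shows "splits_subconverge (\<lambda>k. word_pow (B k) (K k))"
  unfolding splits_subconverge_def
proof (intro allI impI)
  fix \<tau> :: "nat \<Rightarrow> nat" and x y :: "nat \<Rightarrow> 'a list"
  assume \<tau>: "strict_mono \<tau>" and xy: "\<forall>n. x n @ y n = word_pow (B (\<tau> n)) (K (\<tau> n))"
  obtain N where N: "\<And>n. N \<le> n \<Longrightarrow> 0 < K (\<tau> n)"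
    using eventually_subseq[OF \<tau> K] unfolding eventually_sequentially by blast
  define r where "r n = n + N" for n
  have r: "strict_mono r"
    by (simp add: r_def strict_mono_def)
  have \<tau>r: "strict_mono (\<tau> \<circ> r)"
    using strict_mono_o[OF \<tau> r] .
  have "\<exists>i j x' y'. x (r n) = word_pow (B (\<tau> (r n))) i @ x' \<and>
      y (r n) = y' @ word_pow (B (\<tau> (r n))) j \<and> x' @ y' = B (\<tau> (r n))" for n
    using append_eq_word_pow_split[OF xy[rule_format] N] by (simp add: r_def)
  then obtain i j x' y' where split: "\<And>n. x (r n) = word_pow (B (\<tau> (r n))) (i n) @ x' n"
    "\<And>n. y (r n) = y' n @ word_pow (B (\<tau> (r n))) (j n)" "\<And>n. x' n @ y' n = B (\<tau> (r n))"
    by metis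
  have "jointly_subconverge x' y'"
    using B(1) \<tau>r split(3) unfolding splits_subconverge_def by simp
  moreover have "pconv (\<lambda>n. B (\<tau> (r n))) (mu_value sb)"
    using pconv_subseq[OF \<tau>r B(2)] by (simp add: comp_def)
  ultimately have "jointly_subconverge (\<lambda>n. word_pow (B (\<tau> (r n))) (i n) @ x' n)
      (\<lambda>n. y' n @ word_pow (B (\<tau> (r n))) (j n))"
    by (intro jointly_subconverge_append_left jointly_subconverge_append_right
        mu_subconvergent_word_pow)
  then have "jointly_subconverge (x \<circ> r) (y \<circ> r)"
    using split by (simp add: comp_def)
  with r show "jointly_subconverge x y"
    by (rule jointly_subconverge_subseq)
qed

lemma splits_subconverge_apxs_of_apx:
  assumes ap: "approx_ok ap"
    and "\<And>a. a \<in> set ts \<Longrightarrow> splits_subconverge (\<lambda>k. apx ap k a)"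
  shows "splits_subconverge (\<lambda>k. apxs ap k ts)"
  using assms(2)
proof (induct ts)
  case Nil
  show ?case using splits_subconverge_Nil by simp
next
  case (Cons a ts)
  then have "splits_subconverge (\<lambda>k. apx ap k a @ apxs ap k ts)"
    using pconv_apx[OF ap, of a] pconv_apxs[OF ap, of ts] by (intro splits_subconverge_append) auto
  then show ?case by simp
qed

lemma splits_subconverge_apx:
  assumes ap: "approx_ok ap"
  shows "splits_subconverge (\<lambda>k. apx ap k a)"
proof (induct a)
  case (MLet x)
  show ?case using splits_subconverge_letter by simp
next
  case (MPow ts \<alpha>)
  then have "splits_subconverge (\<lambda>k. apxs ap k ts)"
    by (rule splits_subconverge_apxs_of_apx[OF ap])
  moreover have "\<forall>\<^sub>F n in sequentially. 0 < ap \<alpha> n"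
    using ap unfolding approx_ok_def eventually_sequentially
    by (metis seq_suble less_le_trans zero_less_one)
  ultimately have "splits_subconverge (\<lambda>k. word_pow (apxs ap k ts) (ap \<alpha> k))"
    using pconv_apxs[OF ap] by (intro splits_subconverge_word_pow)
  then show ?case
    by (simp add: word_pow_def)
qed

lemma splits_subconverge_apxs: "approx_ok ap \<Longrightarrow> splits_subconverge (\<lambda>k. apxs ap k ts)"
  by (simp add: splits_subconverge_apxs_of_apx splits_subconverge_apx)

theorem lemma2p1:
  fixes ap :: "zhat \<Rightarrow> nat \<Rightarrow> nat"
    and t :: "('a::finite) muterm"
    and x y :: "nat \<Rightarrow> 'a list"
  assumes "approx_ok ap"
    and "factorization_seq ap t x y"
  shows "(\<exists>\<sigma> s. strict_mono \<sigma> \<and> pconv (x \<circ> \<sigma>) (mu_value s)) \<and>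
         (\<exists>\<sigma> s. strict_mono \<sigma> \<and> pconv (y \<circ> \<sigma>) (mu_value s))"
proof -
  have "\<forall>n. x n @ y n = apxs ap (id n) t"
    using assms(2) unfolding factorization_seq_def by simp
  then have "jointly_subconverge x y"
    using splits_subconverge_apxs[OF assms(1), of t] strict_mono_id
    unfolding splits_subconverge_def by blast
  then show ?thesis
    unfolding jointly_subconverge_def by blast
qed

end
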